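(* Fix integers $a,b\ge 2$ and $\varepsilon>0$. Let $n\to\infty$ and let $m=m(n)$ satisfy $m/n\to\infty$. Then all hypergraphs $H\in\mathcal{H}(a,n,m)$, except for $o\!\left(\binom{\binom{n}{a}}{m}\right)$ of them, have the following property: for every coloring $C:[n]\to[b]$ and every $a$-element multiset $T$ of colors from $[b]$, the number of hyperedges of $H$ whose color multiset with respect to $C$ is $T$ lies in the interval $\left[(p^C(T)-\varepsilon)m,\ (p^C(T)+\varepsilon)m\right]$.
   Context: $\mathcal{H}(a,n,m)$ is the family of all $a$-uniform hypergraphs on vertex set $[n]$ with exactly $m$ hyperedges (each hyperedge an $a$-element subset of $[n]$); so $|\mathcal{H}(a,n,m)|=\binom{\binom{n}{a}}{m}$. A coloring $C:[n]\to[b]$ is an arbitrary map (not necessarily proper). For a coloring $C$, $n_j^C$ is the number of vertices of color $j$. The color multiset of a hyperedge $e$ with respect to $C$ is the multiset of colors $C(v)$, $v\in e$, counted with multiplicity. For an $a$-element multiset $T$ of colors, $I_T(j)$ is the multiplicity of $j$ in $T$, and $p^C(T)=\prod_{j=1}^b\binom{n_j^C}{I_T(j)}\big/\binom{n}{a}$, i.e. the probability that a uniformly random $a$-subset of $[n]$ has color multiset $T$. *)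

theory Defs
  imports Complex_Main "HOL-Library.Multiset"
begin

definition hypergraphs :: "nat \<Rightarrow> nat \<Rightarrow> nat \<Rightarrow> nat set set set" where
  "hypergraphs a n m =
     {H. H \<subseteq> {e. e \<subseteq> {1..n} \<and> card e = a} \<and> card H = m}"

definition is_coloring :: "nat \<Rightarrow> nat \<Rightarrow> (nat \<Rightarrow> nat) \<Rightarrow> bool" where
  "is_coloring n b C \<longleftrightarrow> (\<forall>v\<in>{1..n}. C v \<in> {1..b})"

definition color_class_size :: "nat \<Rightarrow> (nat \<Rightarrow> nat) \<Rightarrow> nat \<Rightarrow> nat" where
  "color_class_size n C j = card {v\<in>{1..n}. C v = j}"

definition color_multiset :: "(nat \<Rightarrow> nat) \<Rightarrow> nat set \<Rightarrow> nat multiset" where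
  "color_multiset C e = image_mset C (mset_set e)"

definition color_multisets :: "nat \<Rightarrow> nat \<Rightarrow> nat multiset set" where
  "color_multisets a b = {T. set_mset T \<subseteq> {1..b} \<and> size T = a}"

definition pC :: "nat \<Rightarrow> nat \<Rightarrow> nat \<Rightarrow> (nat \<Rightarrow> nat) \<Rightarrow> nat multiset \<Rightarrow> real" where
  "pC a b n C T =
     (\<Prod>j\<in>{1..b}. real (color_class_size n C j choose count T j)) / real (n choose a)"

definition edges_with_type :: "nat set set \<Rightarrow> (nat \<Rightarrow> nat) \<Rightarrow> nat multiset \<Rightarrow> nat" where
  "edges_with_type H C T = card {e\<in>H. color_multiset C e = T}"

definition good_hypergraph ::
  "nat \<Rightarrow> nat \<Rightarrow> real \<Rightarrow> nat \<Rightarrow> nat \<Rightarrow> nat set set \<Rightarrow> bool" where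
  "good_hypergraph a b \<epsilon> n m H \<longleftrightarrow>
     (\<forall>C. is_coloring n b C \<longrightarrow> (\<forall>T\<in>color_multisets a b.
        (pC a b n C T - \<epsilon>) * real m \<le> real (edges_with_type H C T) \<and>
        real (edges_with_type H C T) \<le> (pC a b n C T + \<epsilon>) * real m))"

end

theory Submission
  imports Defs "HOL-Library.FuncSet" "HOL-Library.Disjoint_Sets"
begin

text \<open>
  For a fixed colouring \<open>C\<close> and colour multiset \<open>T\<close>, a uniformly random \<open>m\<close>-edge hypergraph is
  a uniformly random \<open>m\<close>-subset of the \<open>a\<close>-sets, and the number of its edges with colour multiset
  \<open>T\<close> is hypergeometric with mean \<open>p\<^sup>C(T) m\<close>. Its factorial moments are dominated by those of the binomial
  distribution, so Chernoff's exponential-moment argument bounds the fraction of hypergraphs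
  deviating by more than \<open>\<epsilon> m\<close> by \<open>2 exp (- \<delta> m)\<close> with \<open>\<delta> = \<epsilon>\<^sup>2 / (4 (1 + \<epsilon>))\<close>.
  A union bound over the \<open>b\<^sup>n\<close> colourings of \<open>[n]\<close> and the finitely many colour multisets costs a factor
  \<open>O(b\<^sup>n)\<close>, which is negligible against \<open>exp (- \<delta> m)\<close> because \<open>m / n \<rightarrow> \<infinity>\<close>.
\<close>

section \<open>Hypergeometric tail bounds\<close>

lemma finite_Collect_subsets_conj: "finite U \<Longrightarrow> finite {H. H \<subseteq> U \<and> P H}"
  by (rule finite_subset[of _ "Pow U"]) auto

lemma card_supersets_of_card:
  assumes "finite U" "K \<subseteq> U" "card K \<le> m"
  shows "card {H. H \<subseteq> U \<and> card H = m \<and> K \<subseteq> H} = (card U - card K) choose (m - card K)"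
proof -
  have "finite K" using assms finite_subset by blast
  have "bij_betw (\<lambda>H. H - K) {H. H \<subseteq> U \<and> card H = m \<and> K \<subseteq> H} {D. D \<subseteq> U - K \<and> card D = m - card K}"
  proof (rule bij_betw_byWitness[where f'="\<lambda>D. D \<union> K"])
    show "(\<lambda>D. D \<union> K) ` {D. D \<subseteq> U - K \<and> card D = m - card K} \<subseteq> {H. H \<subseteq> U \<and> card H = m \<and> K \<subseteq> H}"
    proof clarify
      fix D assume D: "D \<subseteq> U - K" "card D = m - card K"
      then have "card (D \<union> K) = card D + card K"
        using \<open>finite K\<close> assms by (intro card_Un_disjoint) (auto intro: finite_subset)
      then show "D \<union> K \<subseteq> U \<and> card (D \<union> K) = m \<and> K \<subseteq> D \<union> K" using D assms by auto
    qed
  qed (use \<open>finite K\<close> in \<open>auto simp: card_Diff_subset\<close>)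
  then have "card {H. H \<subseteq> U \<and> card H = m \<and> K \<subseteq> H} = card {D. D \<subseteq> U - K \<and> card D = m - card K}"
    by (rule bij_betw_same_card)
  also have "\<dots> = card (U - K) choose (m - card K)" using assms by (intro n_subsets) auto
  finally show ?thesis using assms \<open>finite K\<close> by (simp add: card_Diff_subset)
qed

lemma Suc_times_binomial_diff: "Suc k * (n choose Suc k) = (n - k) * (n choose k)"
  by (simp only: binomial_absorption binomial_absorb_comp)

lemma binomial_mult_power_le:
  assumes "s \<le> N"
  shows "real (s choose k) * real N ^ k \<le> real (N choose k) * real s ^ k"
proof (induction k)
  case 0
  then show ?case by simp
next
  case (Suc k)
  have step: "real (s - k) * real N \<le> real (N - k) * real s"
  proof (cases "k \<le> s")
    case True
    then have "real k * real s \<le> real k * real N" using assms by (intro mult_left_mono) auto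
    with True assms show ?thesis by (simp add: of_nat_diff algebra_simps)
  qed simp
  have absorb: "real (Suc k) * real (n choose Suc k) = real (n - k) * real (n choose k)" for n
    by (simp only: of_nat_mult[symmetric] Suc_times_binomial_diff)
  have "real (s choose Suc k) * real N ^ Suc k * Suc k
        = (real (s choose k) * real N ^ k) * (real (s - k) * real N)"
    by (simp only: power_Suc) (metis absorb mult.assoc mult.commute)
  also have "\<dots> \<le> (real (N choose k) * real s ^ k) * (real (N - k) * real s)"
    by (rule mult_mono[OF Suc.IH step]) simp_all
  also have "\<dots> = real (N choose Suc k) * real s ^ Suc k * Suc k"
    by (simp only: power_Suc) (metis absorb mult.assoc mult.commute)
  finally show ?case by (simp del: of_nat_Suc)
qed

lemma sum_binomial_card_Int:
  assumes "finite U" "S \<subseteq> U" "k \<le> m"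
  shows "(\<Sum>H\<in>{H. H \<subseteq> U \<and> card H = m}. card (H \<inter> S) choose k)
         = (card S choose k) * ((card U - k) choose (m - k))"
proof -
  define HH where "HH = {H. H \<subseteq> U \<and> card H = m}"
  define KK where "KK = {K. K \<subseteq> S \<and> card K = k}"
  have "finite S" using assms finite_subset by blast
  have "finite HH" "finite KK"
    unfolding HH_def KK_def using assms \<open>finite S\<close> by (simp_all add: finite_Collect_subsets)
  have "(\<Sum>H\<in>HH. card (H \<inter> S) choose k) = (\<Sum>H\<in>HH. card {K\<in>KK. K \<subseteq> H})"
  proof (rule sum.cong[OF refl])
    fix H
    have "{K\<in>KK. K \<subseteq> H} = {K. K \<subseteq> H \<inter> S \<and> card K = k}" unfolding KK_def by auto
    then show "card (H \<inter> S) choose k = card {K\<in>KK. K \<subseteq> H}"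
      using n_subsets[of "H \<inter> S" k] \<open>finite S\<close> by simp
  qed
  also have "\<dots> = (\<Sum>H\<in>HH. \<Sum>K\<in>KK. if K \<subseteq> H then 1 else 0)"
    using \<open>finite KK\<close> by (simp add: sum.inter_filter[symmetric])
  also have "\<dots> = (\<Sum>K\<in>KK. \<Sum>H\<in>HH. if K \<subseteq> H then 1 else 0)"
    by (rule sum.swap)
  also have "\<dots> = (\<Sum>K\<in>KK. card {H\<in>HH. K \<subseteq> H})"
    using \<open>finite HH\<close> by (simp add: sum.inter_filter[symmetric])
  also have "\<dots> = (\<Sum>K\<in>KK. (card U - k) choose (m - k))"
  proof (rule sum.cong[OF refl])
    fix K assume "K \<in> KK"
    then have "{H\<in>HH. K \<subseteq> H} = {H. H \<subseteq> U \<and> card H = m \<and> K \<subseteq> H}" "K \<subseteq> U" "card K = k"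
      using assms unfolding HH_def KK_def by auto
    then show "card {H\<in>HH. K \<subseteq> H} = (card U - k) choose (m - k)"
      using assms by (simp add: card_supersets_of_card)
  qed
  finally show ?thesis using \<open>finite S\<close> by (simp add: HH_def KK_def n_subsets)
qed

lemma sum_binomial_card_Int_le:
  assumes "finite U" "S \<subseteq> U" "k \<le> m" "m \<le> card U"
  shows "(\<Sum>H\<in>{H. H \<subseteq> U \<and> card H = m}. real (card (H \<inter> S) choose k))
         \<le> real (card U choose m) * real (m choose k) * (real (card S) / real (card U)) ^ k"
proof -
  define N where "N = card U"
  define s where "s = card S"
  have "s \<le> N" unfolding s_def N_def using assms card_mono by blast
  then have ratio: "real (s choose k) \<le> real (N choose k) * (real s / real N) ^ k"
  proof (cases "N = 0")
    case True
    then show ?thesis using \<open>s \<le> N\<close> by (cases k) simp_all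
  next
    case False
    then show ?thesis
      using binomial_mult_power_le[OF \<open>s \<le> N\<close>, of k] by (simp add: power_divide field_simps)
  qed
  have "(\<Sum>H\<in>{H. H \<subseteq> U \<and> card H = m}. real (card (H \<inter> S) choose k))
        = real (s choose k) * real ((N - k) choose (m - k))"
    unfolding s_def N_def using assms by (simp flip: of_nat_sum add: sum_binomial_card_Int)
  also have "\<dots> \<le> real (N choose k) * (real s / real N) ^ k * real ((N - k) choose (m - k))"
    using ratio by (rule mult_right_mono) simp
  also have "\<dots> = real ((N choose k) * ((N - k) choose (m - k))) * (real s / real N) ^ k"
    by simp
  also have "(N choose k) * ((N - k) choose (m - k)) = (N choose m) * (m choose k)"
    using choose_mult[of k m N] assms unfolding N_def by simp
  finally show ?thesis unfolding N_def s_def by (simp flip: of_nat_mult)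
qed

lemma sum_power_card_Int_le:
  fixes t :: real
  assumes "finite U" "S \<subseteq> U" "t \<ge> 0"
  shows "(\<Sum>H\<in>{H. H \<subseteq> U \<and> card H = m}. (1 + t) ^ card (H \<inter> S))
         \<le> real (card U choose m) * (1 + t * real (card S) / real (card U)) ^ m"
proof (cases "m \<le> card U")
  case False
  then have no_subsets: "{H. H \<subseteq> U \<and> card H = m} = {}"
    using assms card_mono by fastforce
  show ?thesis unfolding no_subsets using False by (simp add: binomial_eq_0)
next
  case True
  define HH where "HH = {H. H \<subseteq> U \<and> card H = m}"
  define p where "p = real (card S) / real (card U)"
  have binomial_expansion: "(1 + t) ^ card (H \<inter> S) = (\<Sum>k\<le>m. real (card (H \<inter> S) choose k) * t ^ k)"
    if "H \<in> HH" for H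
  proof -
    have "card (H \<inter> S) \<le> m"
      using that assms card_mono[of H "H \<inter> S"] finite_subset unfolding HH_def by auto
    then have "(\<Sum>k\<le>m. real (card (H \<inter> S) choose k) * t ^ k)
               = (\<Sum>k\<le>card (H \<inter> S). real (card (H \<inter> S) choose k) * t ^ k)"
      by (intro sum.mono_neutral_right) auto
    then show ?thesis using binomial_ring[of t 1 "card (H \<inter> S)"] by (simp add: add.commute)
  qed
  have "(\<Sum>H\<in>HH. (1 + t) ^ card (H \<inter> S))
        = (\<Sum>k\<le>m. t ^ k * (\<Sum>H\<in>HH. real (card (H \<inter> S) choose k)))"
    by (simp add: binomial_expansion sum.swap[of _ HH] sum_distrib_left mult.commute)
  also have "\<dots> \<le> (\<Sum>k\<le>m. t ^ k * (real (card U choose m) * real (m choose k) * p ^ k))"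
    unfolding HH_def p_def using assms True
    by (intro sum_mono mult_left_mono sum_binomial_card_Int_le) auto
  also have "\<dots> = real (card U choose m) * (\<Sum>k\<le>m. real (m choose k) * (t * p) ^ k * 1 ^ (m - k))"
    by (simp add: sum_distrib_left power_mult_distrib mult_ac)
  also have "\<dots> = real (card U choose m) * (1 + t * p) ^ m"
    using binomial_ring[of "t * p" 1 m] by (simp add: add.commute)
  finally show ?thesis unfolding HH_def p_def by simp
qed

definition tail_rate :: "real \<Rightarrow> real" where
  "tail_rate \<epsilon> = \<epsilon>\<^sup>2 / (4 * (1 + \<epsilon>))"

lemma tail_rate_pos: "\<epsilon> > 0 \<Longrightarrow> tail_rate \<epsilon> > 0"
  by (simp add: tail_rate_def)

lemma chernoff_exponent_le:
  fixes p \<epsilon> :: real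
  assumes "0 \<le> p" "p \<le> 1" "\<epsilon> > 0"
  defines "t \<equiv> \<epsilon> / (2 * (1 + \<epsilon>))"
  shows "t * p - (p + \<epsilon>) * ln (1 + t) \<le> - tail_rate \<epsilon>"
proof -
  txt \<open>Using \<open>ln (1 + t) \<ge> t - t\<^sup>2\<close>, the exponent is at most \<open>- \<epsilon> t + (1 + \<epsilon>) t\<^sup>2\<close>, which this \<open>t\<close> minimises.\<close>
  have "0 \<le> t" "t \<le> 1" using assms unfolding t_def by (auto simp: field_simps)
  then have "(p + \<epsilon>) * (t - t\<^sup>2) \<le> (p + \<epsilon>) * ln (1 + t)"
    using assms by (intro mult_left_mono ln_one_plus_pos_lower_bound) auto
  moreover have "(p + \<epsilon>) * t\<^sup>2 \<le> (1 + \<epsilon>) * t\<^sup>2"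
    using assms by (intro mult_right_mono) auto
  moreover have "t * p - (p + \<epsilon>) * (t - t\<^sup>2) = - \<epsilon> * t + (p + \<epsilon>) * t\<^sup>2"
    by (simp add: algebra_simps)
  moreover have "- \<epsilon> * t + (1 + \<epsilon>) * t\<^sup>2 = - tail_rate \<epsilon>"
  proof -
    have "1 + \<epsilon> > 0" using assms by simp
    then have half: "(1 + \<epsilon>) * t = \<epsilon> / 2" unfolding t_def by (simp add: field_simps)
    have "- \<epsilon> * t + (1 + \<epsilon>) * t\<^sup>2 = - (\<epsilon> * t / 2)"
      unfolding power2_eq_square mult.assoc[symmetric] half by simp
    also have "\<dots> = - tail_rate \<epsilon>"
      using \<open>1 + \<epsilon> > 0\<close> by (simp add: t_def tail_rate_def power2_eq_square)
    finally show ?thesis .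
  qed
  ultimately show ?thesis by linarith
qed

lemma card_ge_mult_le_sum:
  fixes g :: "'a \<Rightarrow> real"
  assumes "finite A" "\<And>x. x \<in> A \<Longrightarrow> g x \<ge> 0"
  shows "real (card {x\<in>A. c \<le> g x}) * c \<le> (\<Sum>x\<in>A. g x)"
proof -
  have "real (card {x\<in>A. c \<le> g x}) * c = (\<Sum>x\<in>{x\<in>A. c \<le> g x}. c)" by simp
  also have "\<dots> \<le> (\<Sum>x\<in>{x\<in>A. c \<le> g x}. g x)" by (rule sum_mono) simp
  also have "\<dots> \<le> (\<Sum>x\<in>A. g x)" using assms by (intro sum_mono2) auto
  finally show ?thesis .
qed

lemma card_subsets_upper_tail:
  fixes \<epsilon> :: real
  assumes "finite U" "S \<subseteq> U" "card U > 0" "\<epsilon> > 0"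
  shows "real (card {H. H \<subseteq> U \<and> card H = m \<and>
            (real (card S) / real (card U) + \<epsilon>) * real m \<le> real (card (H \<inter> S))})
         \<le> real (card U choose m) * exp (- tail_rate \<epsilon> * real m)"
proof -
  define p where "p = real (card S) / real (card U)"
  define t where "t = \<epsilon> / (2 * (1 + \<epsilon>))"
  define HH where "HH = {H. H \<subseteq> U \<and> card H = m}"
  define c where "c = exp ((p + \<epsilon>) * real m * ln (1 + t))"
  have "0 \<le> p" "p \<le> 1"
    unfolding p_def using assms card_mono[of U S] by (auto simp: field_simps)
  have "t > 0" unfolding t_def using assms by simp
  have "finite HH" unfolding HH_def using assms(1) by (rule finite_Collect_subsets_conj)
  have power_eq: "(1 + t) ^ k = exp (real k * ln (1 + t))" for k
    using \<open>t > 0\<close> by (simp add: exp_of_nat_mult)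
  have "{H\<in>HH. (p + \<epsilon>) * real m \<le> real (card (H \<inter> S))} = {H\<in>HH. c \<le> (1 + t) ^ card (H \<inter> S)}"
    using \<open>t > 0\<close> by (simp add: c_def power_eq)
  then have "real (card {H\<in>HH. (p + \<epsilon>) * real m \<le> real (card (H \<inter> S))}) * c
      \<le> (\<Sum>H\<in>HH. (1 + t) ^ card (H \<inter> S))"
    using card_ge_mult_le_sum[OF \<open>finite HH\<close>, of "\<lambda>H. (1 + t) ^ card (H \<inter> S)" c] \<open>t > 0\<close> by simp
  also have "\<dots> \<le> real (card U choose m) * (1 + t * p) ^ m"
    using sum_power_card_Int_le[OF assms(1,2), of t m] \<open>t > 0\<close> by (simp add: HH_def p_def)
  also have "\<dots> \<le> real (card U choose m) * exp (t * p) ^ m"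
    using \<open>t > 0\<close> \<open>0 \<le> p\<close> by (intro mult_left_mono power_mono exp_ge_add_one_self) auto
  finally have "real (card {H\<in>HH. (p + \<epsilon>) * real m \<le> real (card (H \<inter> S))})
      \<le> real (card U choose m) * exp (real m * (t * p - (p + \<epsilon>) * ln (1 + t)))"
    by (simp add: c_def field_simps exp_diff exp_of_nat_mult[symmetric])
  also have "\<dots> \<le> real (card U choose m) * exp (- tail_rate \<epsilon> * real m)"
  proof -
    have "real m * (t * p - (p + \<epsilon>) * ln (1 + t)) \<le> real m * (- tail_rate \<epsilon>)"
      using chernoff_exponent_le[OF \<open>0 \<le> p\<close> \<open>p \<le> 1\<close> assms(4)]
      by (intro mult_left_mono) (simp_all add: t_def)
    then show ?thesis by (intro mult_left_mono) (simp_all add: mult.commute)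
  qed
  finally show ?thesis by (simp add: HH_def p_def)
qed

lemma card_subsets_lower_tail:
  fixes \<epsilon> :: real
  assumes "finite U" "S \<subseteq> U" "card U > 0" "\<epsilon> > 0"
  shows "real (card {H. H \<subseteq> U \<and> card H = m \<and>
            real (card (H \<inter> S)) \<le> (real (card S) / real (card U) - \<epsilon>) * real m})
         \<le> real (card U choose m) * exp (- tail_rate \<epsilon> * real m)"
proof -
  have "finite S" using assms finite_subset by blast
  have complement_ratio: "real (card (U - S)) / real (card U) = 1 - real (card S) / real (card U)"
    using assms \<open>finite S\<close> card_mono[of U S]
    by (simp add: card_Diff_subset of_nat_diff diff_divide_distrib card_gt_0_iff)
  have "{H. H \<subseteq> U \<and> card H = m \<and> real (card (H \<inter> S)) \<le> (real (card S) / real (card U) - \<epsilon>) * real m}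
     \<subseteq> {H. H \<subseteq> U \<and> card H = m \<and>
          (real (card (U - S)) / real (card U) + \<epsilon>) * real m \<le> real (card (H \<inter> (U - S)))}"
  proof
    fix H assume "H \<in> {H. H \<subseteq> U \<and> card H = m \<and>
        real (card (H \<inter> S)) \<le> (real (card S) / real (card U) - \<epsilon>) * real m}"
    then have H: "H \<subseteq> U" "card H = m"
      and lower: "real (card (H \<inter> S)) \<le> (real (card S) / real (card U) - \<epsilon>) * real m"
      by auto
    have "finite H" using H assms finite_subset by blast
    have "H \<inter> (U - S) = H - S" using H by auto
    then have "real (card (H \<inter> (U - S))) = real m - real (card (H \<inter> S))"
      using H \<open>finite H\<close> card_mono[of H "H \<inter> S"] by (simp add: card_Diff_subset_Int of_nat_diff)
    moreover have "(1 - real (card S) / real (card U) + \<epsilon>) * real m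
        = real m - (real (card S) / real (card U) - \<epsilon>) * real m"
      by (simp add: algebra_simps)
    ultimately have "(real (card (U - S)) / real (card U) + \<epsilon>) * real m \<le> real (card (H \<inter> (U - S)))"
      using lower unfolding complement_ratio by linarith
    with H show "H \<in> {H. H \<subseteq> U \<and> card H = m \<and>
        (real (card (U - S)) / real (card U) + \<epsilon>) * real m \<le> real (card (H \<inter> (U - S)))}"
      unfolding mem_Collect_eq by (intro conjI)
  qed
  then have "card {H. H \<subseteq> U \<and> card H = m \<and> real (card (H \<inter> S)) \<le> (real (card S) / real (card U) - \<epsilon>) * real m}
     \<le> card {H. H \<subseteq> U \<and> card H = m \<and>
          (real (card (U - S)) / real (card U) + \<epsilon>) * real m \<le> real (card (H \<inter> (U - S)))}"
    using assms(1) by (intro card_mono finite_Collect_subsets_conj)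
  also have "real \<dots> \<le> real (card U choose m) * exp (- tail_rate \<epsilon> * real m)"
    using assms by (intro card_subsets_upper_tail) auto
  finally show ?thesis by simp
qed

lemma card_subsets_deviating_le:
  fixes \<epsilon> :: real
  assumes "finite U" "S \<subseteq> U" "card U > 0" "\<epsilon> > 0"
  shows "real (card {H. H \<subseteq> U \<and> card H = m \<and>
            \<not> ((real (card S) / real (card U) - \<epsilon>) * real m \<le> real (card (H \<inter> S)) \<and>
               real (card (H \<inter> S)) \<le> (real (card S) / real (card U) + \<epsilon>) * real m)})
         \<le> 2 * real (card U choose m) * exp (- tail_rate \<epsilon> * real m)"
proof -
  define p where "p = real (card S) / real (card U)"
  define lower where "lower = {H. H \<subseteq> U \<and> card H = m \<and> real (card (H \<inter> S)) \<le> (p - \<epsilon>) * real m}"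
  define upper where "upper = {H. H \<subseteq> U \<and> card H = m \<and> (p + \<epsilon>) * real m \<le> real (card (H \<inter> S))}"
  have "finite lower" "finite upper"
    unfolding lower_def upper_def using assms(1) by (simp_all add: finite_Collect_subsets_conj)
  have "{H. H \<subseteq> U \<and> card H = m \<and>
            \<not> ((p - \<epsilon>) * real m \<le> real (card (H \<inter> S)) \<and> real (card (H \<inter> S)) \<le> (p + \<epsilon>) * real m)}
      \<subseteq> lower \<union> upper"
    unfolding lower_def upper_def by auto
  then have "card {H. H \<subseteq> U \<and> card H = m \<and>
            \<not> ((p - \<epsilon>) * real m \<le> real (card (H \<inter> S)) \<and> real (card (H \<inter> S)) \<le> (p + \<epsilon>) * real m)}
      \<le> card lower + card upper"
    using \<open>finite lower\<close> \<open>finite upper\<close> card_Un_le[of lower upper]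
    by (meson card_mono finite_UnI order_trans)
  also have "real (card lower + card upper) \<le> 2 * real (card U choose m) * exp (- tail_rate \<epsilon> * real m)"
    using card_subsets_lower_tail[OF assms, of m] card_subsets_upper_tail[OF assms, of m]
    unfolding lower_def upper_def p_def by simp
  finally show ?thesis unfolding p_def by simp
qed

section \<open>Colour classes\<close>

lemma count_color_multiset:
  assumes "finite e"
  shows "count (color_multiset C e) j = card {v\<in>e. C v = j}"
proof -
  have "count (color_multiset C e) j = (\<Sum>v\<in>C -` {j} \<inter> e. count (mset_set e) v)"
    unfolding color_multiset_def count_image_mset using assms by simp
  also have "\<dots> = card (C -` {j} \<inter> e)" using assms by simp
  also have "C -` {j} \<inter> e = {v\<in>e. C v = j}" by auto
  finally show ?thesis .
qed

lemma color_multiset_eq_iff: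
  assumes "finite e" "C ` e \<subseteq> B" "set_mset T \<subseteq> B"
  shows "color_multiset C e = T \<longleftrightarrow> (\<forall>j\<in>B. card {v\<in>e. C v = j} = count T j)"
proof
  assume "\<forall>j\<in>B. card {v\<in>e. C v = j} = count T j"
  then show "color_multiset C e = T"
  proof (intro multiset_eqI)
    fix j
    show "count (color_multiset C e) j = count T j"
    proof (cases "j \<in> B")
      case False
      then have "{v\<in>e. C v = j} = {}" "count T j = 0"
        using assms by (auto simp: not_in_iff[symmetric])
      then show ?thesis using count_color_multiset[OF assms(1)] by (simp del: Collect_empty_eq)
    qed (use \<open>\<forall>j\<in>B. _\<close> count_color_multiset[OF assms(1)] in simp)
  qed
qed (use count_color_multiset[OF assms(1)] in auto)

lemma card_subsets_with_Int_cards: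
  assumes "finite I" "disjoint_family_on V I" "\<And>j. j \<in> I \<Longrightarrow> finite (V j)"
  shows "card {e. e \<subseteq> (\<Union>j\<in>I. V j) \<and> (\<forall>j\<in>I. card (e \<inter> V j) = k j)}
         = (\<Prod>j\<in>I. card (V j) choose k j)"
proof -
  define P where "P = (\<Pi>\<^sub>E j\<in>I. {D. D \<subseteq> V j \<and> card D = k j})"
  have Union_Int: "(\<Union>i\<in>I. g i) \<inter> V j = g j" if g: "\<forall>i\<in>I. g i \<subseteq> V i" and "j \<in> I" for g j
  proof (intro equalityI subsetI)
    fix v assume "v \<in> (\<Union>i\<in>I. g i) \<inter> V j"
    then obtain i where "i \<in> I" "v \<in> g i" "v \<in> V j" by blast
    then have "i = j"
      using g \<open>j \<in> I\<close> assms(2) unfolding disjoint_family_on_def by blast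
    with \<open>v \<in> g i\<close> show "v \<in> g j" by simp
  qed (use that in blast)
  have "bij_betw (\<lambda>e. \<lambda>j\<in>I. e \<inter> V j)
          {e. e \<subseteq> (\<Union>j\<in>I. V j) \<and> (\<forall>j\<in>I. card (e \<inter> V j) = k j)} P"
  proof (rule bij_betw_byWitness[where f'="\<lambda>g. \<Union>j\<in>I. g j"])
    show "\<forall>g\<in>P. (\<lambda>j\<in>I. (\<Union>i\<in>I. g i) \<inter> V j) = g"
      using Union_Int unfolding P_def by (auto simp: PiE_iff intro!: extensionalityI[where A=I])
  qed (auto simp: P_def PiE_iff Union_Int)
  then have "card {e. e \<subseteq> (\<Union>j\<in>I. V j) \<and> (\<forall>j\<in>I. card (e \<inter> V j) = k j)} = card P"
    by (rule bij_betw_same_card)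
  also have "\<dots> = (\<Prod>j\<in>I. card (V j) choose k j)"
    unfolding P_def using assms by (simp add: card_PiE n_subsets)
  finally show ?thesis .
qed

lemma card_edges_with_color_multiset:
  assumes C: "is_coloring n b C" and T: "T \<in> color_multisets a b"
  shows "card {e. e \<subseteq> {1..n} \<and> card e = a \<and> color_multiset C e = T}
         = (\<Prod>j\<in>{1..b}. color_class_size n C j choose count T j)"
proof -
  define V where "V j = {v\<in>{1..n}. C v = j}" for j
  have "set_mset T \<subseteq> {1..b}" "size T = a" using T by (auto simp: color_multisets_def)
  have Union_V: "(\<Union>j\<in>{1..b}. V j) = {1..n}" using C by (auto simp: V_def is_coloring_def)
  have type_iff: "color_multiset C e = T \<longleftrightarrow> (\<forall>j\<in>{1..b}. card (e \<inter> V j) = count T j)"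
    if "e \<subseteq> {1..n}" for e
  proof -
    have "e \<inter> V j = {v\<in>e. C v = j}" for j using that by (auto simp: V_def)
    moreover have "finite e" "C ` e \<subseteq> {1..b}"
      using that C finite_subset by (auto simp: is_coloring_def)
    ultimately show ?thesis using color_multiset_eq_iff \<open>set_mset T \<subseteq> {1..b}\<close> by simp
  qed
  have size_color_multiset: "size (color_multiset C e) = card e" for e
    by (simp add: color_multiset_def)
  have "{e. e \<subseteq> {1..n} \<and> card e = a \<and> color_multiset C e = T}
        = {e. e \<subseteq> (\<Union>j\<in>{1..b}. V j) \<and> (\<forall>j\<in>{1..b}. card (e \<inter> V j) = count T j)}"
    unfolding Union_V using type_iff size_color_multiset \<open>size T = a\<close> by metis
  also have "card \<dots> = (\<Prod>j\<in>{1..b}. card (V j) choose count T j)"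
    by (rule card_subsets_with_Int_cards) (auto simp: V_def disjoint_family_on_def)
  finally show ?thesis by (simp add: V_def color_class_size_def)
qed

lemma pC_eq_edge_fraction:
  assumes "is_coloring n b C" "T \<in> color_multisets a b"
  shows "pC a b n C T
         = real (card {e. e \<subseteq> {1..n} \<and> card e = a \<and> color_multiset C e = T}) / real (n choose a)"
  using card_edges_with_color_multiset[OF assms] by (simp add: pC_def)

section \<open>The union bound\<close>

lemma finite_color_multisets: "finite (color_multisets a b)"
proof -
  have "color_multisets a b \<subseteq> mset ` {xs. set xs \<subseteq> {1..b} \<and> length xs = a}"
    by (auto simp: color_multisets_def image_iff) (metis ex_mset set_mset_mset size_mset)
  moreover have "finite {xs. set xs \<subseteq> {1..b} \<and> length xs = a}"
    by (rule finite_lists_length_eq) simp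
  ultimately show ?thesis by (auto intro: finite_subset)
qed

definition type_count_near ::
  "nat \<Rightarrow> nat \<Rightarrow> real \<Rightarrow> nat \<Rightarrow> nat \<Rightarrow> nat set set \<Rightarrow> (nat \<Rightarrow> nat) \<Rightarrow> nat multiset \<Rightarrow> bool" where
  "type_count_near a b \<epsilon> n m H C T \<longleftrightarrow>
     (pC a b n C T - \<epsilon>) * real m \<le> real (edges_with_type H C T) \<and>
     real (edges_with_type H C T) \<le> (pC a b n C T + \<epsilon>) * real m"

lemma good_hypergraph_iff_restricted_colorings:
  assumes "H \<in> hypergraphs a n m"
  shows "good_hypergraph a b \<epsilon> n m H \<longleftrightarrow>
         (\<forall>C\<in>(\<Pi>\<^sub>E v\<in>{1..n}. {1..b}). \<forall>T\<in>color_multisets a b. type_count_near a b \<epsilon> n m H C T)"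
proof -
  have "type_count_near a b \<epsilon> n m H (restrict C {1..n}) T = type_count_near a b \<epsilon> n m H C T" for C T
  proof -
    have "color_class_size n (restrict C {1..n}) j = color_class_size n C j" for j
      unfolding color_class_size_def by (intro arg_cong[where f=card]) auto
    moreover have "color_multiset (restrict C {1..n}) e = color_multiset C e" if "e \<subseteq> {1..n}" for e
      unfolding color_multiset_def using that finite_subset[OF that] by (intro image_mset_cong) auto
    then have "edges_with_type H (restrict C {1..n}) T = edges_with_type H C T"
      using assms unfolding edges_with_type_def hypergraphs_def by (intro arg_cong[where f=card]) auto
    ultimately show ?thesis by (simp add: type_count_near_def pC_def)
  qed
  moreover have "restrict C {1..n} \<in> (\<Pi>\<^sub>E v\<in>{1..n}. {1..b})" if "is_coloring n b C" for C
    using that by (auto simp: is_coloring_def)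
  moreover have "is_coloring n b C" if "C \<in> (\<Pi>\<^sub>E v\<in>{1..n}. {1..b})" for C
    using that by (auto simp: is_coloring_def)
  ultimately show ?thesis
    unfolding good_hypergraph_def type_count_near_def[symmetric] by blast
qed

lemma card_not_type_count_near_le:
  fixes \<epsilon> :: real
  assumes "\<epsilon> > 0" "a \<le> n" "is_coloring n b C" "T \<in> color_multisets a b"
  shows "real (card {H \<in> hypergraphs a n m. \<not> type_count_near a b \<epsilon> n m H C T})
         \<le> 2 * real (card (hypergraphs a n m)) * exp (- tail_rate \<epsilon> * real m)"
proof -
  define U where "U = {e. e \<subseteq> {1..n} \<and> card e = a}"
  define S where "S = {e. e \<subseteq> {1..n} \<and> card e = a \<and> color_multiset C e = T}"
  have "finite U" unfolding U_def by (simp add: finite_Collect_subsets_conj)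
  have "card U = n choose a" unfolding U_def using n_subsets[of "{1..n}" a] by simp
  then have "S \<subseteq> U" "card U > 0" using \<open>a \<le> n\<close> by (auto simp: S_def U_def)
  have hypergraphs_U: "hypergraphs a n m = {H. H \<subseteq> U \<and> card H = m}"
    unfolding hypergraphs_def U_def ..
  have "edges_with_type H C T = card (H \<inter> S)" if "H \<subseteq> U" for H
    unfolding edges_with_type_def S_def using that U_def by (intro arg_cong[where f=card]) auto
  then have "{H \<in> hypergraphs a n m. \<not> type_count_near a b \<epsilon> n m H C T}
    = {H. H \<subseteq> U \<and> card H = m \<and>
        \<not> ((real (card S) / real (card U) - \<epsilon>) * real m \<le> real (card (H \<inter> S)) \<and>
           real (card (H \<inter> S)) \<le> (real (card S) / real (card U) + \<epsilon>) * real m)}"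
    using pC_eq_edge_fraction[OF assms(3,4)] \<open>card U = n choose a\<close>
    unfolding type_count_near_def hypergraphs_U S_def by auto
  with card_subsets_deviating_le[OF \<open>finite U\<close> \<open>S \<subseteq> U\<close> \<open>card U > 0\<close> \<open>\<epsilon> > 0\<close>, of m]
  show ?thesis unfolding hypergraphs_U n_subsets[OF \<open>finite U\<close>] by simp
qed

lemma card_not_good_hypergraph_le:
  fixes \<epsilon> :: real
  assumes "\<epsilon> > 0" "a \<le> n"
  shows "real (card {H \<in> hypergraphs a n m. \<not> good_hypergraph a b \<epsilon> n m H})
         \<le> 2 * real (card (color_multisets a b)) * real b ^ n
            * real (card (hypergraphs a n m)) * exp (- tail_rate \<epsilon> * real m)"
proof -
  define F where "F = (\<Pi>\<^sub>E v\<in>{1..n}. {1..b})"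
  define TT where "TT = color_multisets a b"
  define bad where "bad C T = {H \<in> hypergraphs a n m. \<not> type_count_near a b \<epsilon> n m H C T}" for C T
  have "finite F" "finite TT"
    unfolding F_def TT_def by (simp_all add: finite_PiE finite_color_multisets)
  have "finite (hypergraphs a n m)"
    unfolding hypergraphs_def by (simp add: finite_Collect_subsets_conj)
  have "{H \<in> hypergraphs a n m. \<not> good_hypergraph a b \<epsilon> n m H} \<subseteq> (\<Union>C\<in>F. \<Union>T\<in>TT. bad C T)"
    by (auto simp: bad_def F_def TT_def good_hypergraph_iff_restricted_colorings)
  then have "card {H \<in> hypergraphs a n m. \<not> good_hypergraph a b \<epsilon> n m H}
      \<le> card (\<Union>C\<in>F. \<Union>T\<in>TT. bad C T)"
    by (rule card_mono[rotated])
      (rule finite_subset[OF _ \<open>finite (hypergraphs a n m)\<close>], auto simp: bad_def)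
  also have "\<dots> \<le> (\<Sum>C\<in>F. card (\<Union>T\<in>TT. bad C T))"
    using \<open>finite F\<close> by (rule card_UN_le)
  also have "\<dots> \<le> (\<Sum>C\<in>F. \<Sum>T\<in>TT. card (bad C T))"
    using \<open>finite TT\<close> by (intro sum_mono card_UN_le)
  finally have "real (card {H \<in> hypergraphs a n m. \<not> good_hypergraph a b \<epsilon> n m H})
      \<le> (\<Sum>C\<in>F. \<Sum>T\<in>TT. real (card (bad C T)))"
    by (simp flip: of_nat_sum)
  also have "\<dots> \<le> (\<Sum>C\<in>F. \<Sum>T\<in>TT. 2 * real (card (hypergraphs a n m)) * exp (- tail_rate \<epsilon> * real m))"
    using assms unfolding bad_def F_def TT_def
    by (intro sum_mono card_not_type_count_near_le) (auto simp: is_coloring_def)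
  finally show ?thesis unfolding F_def TT_def by (simp add: card_PiE mult_ac)
qed

lemma power_mult_exp_tendsto_zero:
  fixes B \<delta> :: real and f :: "nat \<Rightarrow> real"
  assumes "B > 0" "\<delta> > 0" "filterlim (\<lambda>n. f n / real n) at_top sequentially"
  shows "(\<lambda>n. B ^ n * exp (- \<delta> * f n)) \<longlonglongrightarrow> 0"
proof -
  define g where "g n = real n * (\<delta> * (f n / real n) - ln B)" for n
  have "filterlim (\<lambda>n. \<delta> * (f n / real n) - ln B) at_top sequentially"
    using assms(2,3) by (intro filterlim_tendsto_add_at_top[where f="\<lambda>_. - ln B", simplified]
        filterlim_tendsto_pos_mult_at_top[OF tendsto_const]) auto
  then have "filterlim g at_top sequentially"
    unfolding g_def by (intro filterlim_at_top_mult_at_top filterlim_real_sequentially)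
  then have "(\<lambda>n. exp (- g n)) \<longlonglongrightarrow> 0"
    by (rule filterlim_compose[OF exp_at_bot filterlim_compose[OF filterlim_uminus_at_bot_at_top]])
  moreover have "eventually (\<lambda>n. exp (- g n) = B ^ n * exp (- \<delta> * f n)) sequentially"
  proof (rule eventually_mono[OF eventually_gt_at_top[of 0]])
    fix n :: nat assume "n > 0"
    have "B ^ n = exp (real n * ln B)" using \<open>B > 0\<close> by (simp add: exp_of_nat_mult)
    then show "exp (- g n) = B ^ n * exp (- \<delta> * f n)"
      using \<open>n > 0\<close> by (simp add: g_def algebra_simps flip: exp_add)
  qed
  ultimately show ?thesis by (rule Lim_transform_eventually)
qed

theorem lemma11:
  fixes a b :: nat and \<epsilon> :: real and m :: "nat \<Rightarrow> nat"
  assumes "a \<ge> 2" and "b \<ge> 2" and "\<epsilon> > 0"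
    and "filterlim (\<lambda>n. real (m n) / real n) at_top sequentially"
  shows "(\<lambda>n. real (card {H \<in> hypergraphs a n (m n). \<not> good_hypergraph a b \<epsilon> n (m n) H})
               / real (card (hypergraphs a n (m n)))) \<longlonglongrightarrow> 0"
proof (rule tendsto_sandwich[OF _ _ tendsto_const])
  define K where "K = 2 * real (card (color_multisets a b))"
  show "(\<lambda>n. K * (real b ^ n * exp (- tail_rate \<epsilon> * real (m n)))) \<longlonglongrightarrow> 0"
    using assms by (intro tendsto_mult_right_zero power_mult_exp_tendsto_zero tail_rate_pos) auto
  show "eventually (\<lambda>n. real (card {H \<in> hypergraphs a n (m n). \<not> good_hypergraph a b \<epsilon> n (m n) H})
      / real (card (hypergraphs a n (m n))) \<le> K * (real b ^ n * exp (- tail_rate \<epsilon> * real (m n))))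
      sequentially"
  proof (rule eventually_mono[OF eventually_ge_at_top[of a]])
    fix n assume "a \<le> n"
    from card_not_good_hypergraph_le[OF \<open>\<epsilon> > 0\<close> this, where b=b and m="m n"]
    show "real (card {H \<in> hypergraphs a n (m n). \<not> good_hypergraph a b \<epsilon> n (m n) H})
      / real (card (hypergraphs a n (m n))) \<le> K * (real b ^ n * exp (- tail_rate \<epsilon> * real (m n)))"
      by (cases "card (hypergraphs a n (m n)) = 0") (simp_all add: K_def divide_le_eq mult_ac)
  qed
qed simp

end
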